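(* Let $H$ be a set of $n$ objects with an associated decomposition scheme of combinatorial dimension $b$ that complies with the Clarkson–Shor framework. Assume its local growth function satisfies $u(m)\le 2^\alpha m^\beta$ for all $m$, for some real $\alpha$ and some $\beta\ge 1$. Let $R$ be a $\rho$-sample from $H$ with $\rho\ge 4b$, and let $\ell>1$. Let $\mathcal{CD}_{\ge \ell}(R)$ denote the set of $\ell$-heavy cells of $\mathcal{CD}(R)$. Then $$\mathbb{E}\bigl[\,|\mathcal{CD}_{\ge\ell}(R)|\,\bigr]\ \le\ 3^b\,2^{\alpha-\beta}\rho^\beta e^{-\ell/2}.$$
   Context: Clarkson–Shor framework. $H$ is a finite set of objects embedded in some space $E$. Every subset $I\subseteq H$ determines a set $\mathcal{CD}(I)$ of cells, which are subsets of $E$. Combinatorial dimension: there is an integer $b>0$ such that for every $I\subseteq H$ and every $\sigma\in\mathcal{CD}(I)$ there is $J\subseteq I$ with $|J|\le b$ and $\sigma\in\mathcal{CD}(J)$. A smallest such $J$ is a defining set $D(\sigma)$ of $\sigma$; it need not be unique, and any choice may be used. The least such $b$ is the combinatorial dimension. Conflict list: an object $f\in H$ conflicts with $\sigma$ if $\sigma\notin\mathcal{CD}(D(\sigma)\cup\{f\})$. The conflict list $K(\sigma)$ is the set of objects of $H$ that conflict with $\sigma$; always $D(\sigma)\cap K(\sigma)=\emptyset$. Compliance with the framework means both axioms hold: (i) for every $R\subseteq H$ and every $\sigma\in\mathcal{CD}(R)$, some defining set $D(\sigma)$ satisfies $D(\sigma)\subseteq R$, and $K(\sigma)\cap R=\emptyset$;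 (ii) for every $R\subseteq H$, if $D(\sigma)\subseteq R$ for some defining set of $\sigma$ and $K(\sigma)\cap R=\emptyset$, then $\sigma\in\mathcal{CD}(R)$. Local growth function: $u(m)=\max_{I\subseteq H,\,|I|=m}|\mathcal{CD}(I)|$. A $\rho$-sample is the set of elements obtained by $\rho$ independent uniform draws from $H$, with repetition. For a fixed $\rho$, a cell $\sigma$ is $\ell$-heavy if $|K(\sigma)|\ge \ell n/\rho$, where $n=|H|$. *)

theory Defs
  imports "HOL-Probability.Probability"
begin

definition is_defining_set :: "'h set \<Rightarrow> ('h set \<Rightarrow> 'c set) \<Rightarrow> 'c \<Rightarrow> 'h set \<Rightarrow> bool" where
  "is_defining_set H CD \<sigma> J \<longleftrightarrow>
     J \<subseteq> H \<and> \<sigma> \<in> CD J \<and> (\<forall>J'. J' \<subseteq> H \<and> \<sigma> \<in> CD J' \<longrightarrow> card J \<le> card J')"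

definition has_dim_bound :: "'h set \<Rightarrow> ('h set \<Rightarrow> 'c set) \<Rightarrow> nat \<Rightarrow> bool" where
  "has_dim_bound H CD b \<longleftrightarrow> b > 0 \<and>
     (\<forall>I. I \<subseteq> H \<longrightarrow> (\<forall>\<sigma>\<in>CD I. \<exists>J. J \<subseteq> I \<and> card J \<le> b \<and> \<sigma> \<in> CD J))"

definition comb_dim :: "'h set \<Rightarrow> ('h set \<Rightarrow> 'c set) \<Rightarrow> nat \<Rightarrow> bool" where
  "comb_dim H CD b \<longleftrightarrow> has_dim_bound H CD b \<and> (\<forall>b'. has_dim_bound H CD b' \<longrightarrow> b \<le> b')"

text \<open>D is a (fixed, arbitrary) choice of a defining set for each cell.\<close>
definition valid_defining_choice :: "'h set \<Rightarrow> ('h set \<Rightarrow> 'c set) \<Rightarrow> ('c \<Rightarrow> 'h set) \<Rightarrow> bool" where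
  "valid_defining_choice H CD D \<longleftrightarrow>
     (\<forall>I. I \<subseteq> H \<longrightarrow> (\<forall>\<sigma>\<in>CD I. is_defining_set H CD \<sigma> (D \<sigma>)))"

definition conflict_list :: "'h set \<Rightarrow> ('h set \<Rightarrow> 'c set) \<Rightarrow> ('c \<Rightarrow> 'h set) \<Rightarrow> 'c \<Rightarrow> 'h set" where
  "conflict_list H CD D \<sigma> = {f \<in> H. \<sigma> \<notin> CD (D \<sigma> \<union> {f})}"

definition complies_CS :: "'h set \<Rightarrow> ('h set \<Rightarrow> 'c set) \<Rightarrow> ('c \<Rightarrow> 'h set) \<Rightarrow> bool" where
  "complies_CS H CD D \<longleftrightarrow>
     (\<forall>R. R \<subseteq> H \<longrightarrow> (\<forall>\<sigma>\<in>CD R.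
        (\<exists>J. is_defining_set H CD \<sigma> J \<and> J \<subseteq> R) \<and> conflict_list H CD D \<sigma> \<inter> R = {})) \<and>
     (\<forall>R \<sigma>. R \<subseteq> H \<longrightarrow>
        (\<exists>J. is_defining_set H CD \<sigma> J \<and> J \<subseteq> R) \<and> conflict_list H CD D \<sigma> \<inter> R = {}
        \<longrightarrow> \<sigma> \<in> CD R)"

definition local_growth :: "'h set \<Rightarrow> ('h set \<Rightarrow> 'c set) \<Rightarrow> nat \<Rightarrow> nat" where
  "local_growth H CD m = Max {card (CD I) | I. I \<subseteq> H \<and> card I = m}"

definition rho_sample :: "'h set \<Rightarrow> nat \<Rightarrow> 'h set pmf" where
  "rho_sample H \<rho> = map_pmf set (replicate_pmf \<rho> (pmf_of_set H))"

definition heavy_cells ::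
  "'h set \<Rightarrow> ('h set \<Rightarrow> 'c set) \<Rightarrow> ('c \<Rightarrow> 'h set) \<Rightarrow> nat \<Rightarrow> real \<Rightarrow> 'h set \<Rightarrow> 'c set" where
  "heavy_cells H CD D \<rho> l R =
     {\<sigma> \<in> CD R. real (card (conflict_list H CD D \<sigma>)) \<ge> l * real (card H) / real \<rho>}"

end

theory Submission
  imports Defs
begin

text \<open>
  A \<rho>-sample is the image of a uniformly random map f from \<rho> indices to H, and a cell \<sigma> lies
  in CD (f ` I) iff f avoids the conflict list K(\<sigma>) and hits a defining set, which has at
  most b elements. Double counting these maps against their k-subsets of indices (k = \<rho> div 2),
  at least (\<rho>-b choose k-b) \<ge> (\<rho> choose k) / 3^b of which already hit the defining set, shows
  that there are at most 3^b times as many of them as maps on k indices producing \<sigma>, times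
  (n - |K(\<sigma>)|)^(\<rho>-k) choices for the remaining indices. For a heavy cell the last factor is
  at most n^(\<rho>-k) e^(-l/2), and summed over all cells the maps on k indices contribute at most
  n^k u(k) \<le> n^k 2^\<alpha> (\<rho>/2)^\<beta>.
\<close>

lemma replicate_pmf_of_set:
  assumes "finite A" "A \<noteq> {}"
  shows "replicate_pmf n (pmf_of_set A) = pmf_of_set {xs. set xs \<subseteq> A \<and> length xs = n}"
proof (induction n)
  case 0
  have "{xs. set xs \<subseteq> A \<and> length xs = 0} = {[]}" by auto
  then show ?case by (simp only: replicate_pmf.simps pmf_of_set_singleton)
next
  case (Suc n)
  let ?L = "\<lambda>n. {xs. set xs \<subseteq> A \<and> length xs = n}"
  have fin: "finite (?L m)" for m using assms(1) by (simp add: finite_lists_length_eq)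
  obtain x where "x \<in> A" using assms(2) by blast
  then have ne: "?L m \<noteq> {}" for m
    by (auto intro!: exI[of _ "replicate m x"])
  have "replicate_pmf (Suc n) (pmf_of_set A) = map_pmf (\<lambda>(x,xs). x#xs) (pair_pmf (pmf_of_set A) (pmf_of_set (?L n)))"
    by (simp add: Suc pair_pmf_def map_bind_pmf bind_return_pmf map_pmf_def bind_assoc_pmf)
  also have "pair_pmf (pmf_of_set A) (pmf_of_set (?L n)) = pmf_of_set (A \<times> ?L n)"
  proof (rule pmf_eqI)
    fix z :: "'a \<times> 'a list"
    show "pmf (pair_pmf (pmf_of_set A) (pmf_of_set (?L n))) z = pmf (pmf_of_set (A \<times> ?L n)) z"
      using assms fin ne by (cases z) (simp add: pmf_pair card_cartesian_product indicator_def)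
  qed
  also have "map_pmf (\<lambda>(x,xs). x#xs) (pmf_of_set (A \<times> ?L n)) = pmf_of_set ((\<lambda>(x,xs). x#xs) ` (A \<times> ?L n))"
    using assms fin ne by (intro map_pmf_of_set_inj) (auto simp: inj_on_def)
  also have "(\<lambda>(x,xs). x#xs) ` (A \<times> ?L n) = ?L (Suc n)"
    by (auto simp: length_Suc_conv image_iff)
  finally show ?case .
qed

lemma expectation_rho_sample:
  assumes "finite H" "H \<noteq> {}"
  shows "measure_pmf.expectation (rho_sample H \<rho>) F
           = (\<Sum>f\<in>{..<\<rho>} \<rightarrow>\<^sub>E H. F (f ` {..<\<rho>})) / real (card H) ^ \<rho>"
proof -
  let ?L = "{xs. set xs \<subseteq> H \<and> length xs = \<rho>}"
  obtain h where "h \<in> H" using assms(2) by blast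
  then have "?L \<noteq> {}" by (auto intro!: exI[of _ "replicate \<rho> h"])
  then have "measure_pmf.expectation (rho_sample H \<rho>) F = (\<Sum>xs\<in>?L. F (set xs)) / real (card ?L)"
    unfolding rho_sample_def replicate_pmf_of_set[OF assms]
    using assms(1) by (auto simp: integral_pmf_of_set finite_lists_length_eq)
  also have "(\<Sum>xs\<in>?L. F (set xs)) = (\<Sum>f\<in>{..<\<rho>} \<rightarrow>\<^sub>E H. F (f ` {..<\<rho>}))"
  proof (rule sum.reindex_bij_witness[where i="\<lambda>f. map f [0..<\<rho>]" and j="\<lambda>xs. restrict (nth xs) {..<\<rho>}"])
    fix xs assume xs: "xs \<in> ?L"
    show "map (restrict ((!) xs) {..<\<rho>}) [0..<\<rho>] = xs"
      using xs by (auto intro: nth_equalityI)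
    show "restrict ((!) xs) {..<\<rho>} \<in> {..<\<rho>} \<rightarrow>\<^sub>E H"
      using xs by auto
    have "restrict ((!) xs) {..<\<rho>} ` {..<\<rho>} = set xs" using xs by (auto simp: set_conv_nth)
    then show "F (restrict ((!) xs) {..<\<rho>} ` {..<\<rho>}) = F (set xs)" by simp
  qed (auto simp: PiE_iff extensional_def fun_eq_iff)
  finally show ?thesis using assms(1) by (simp add: card_lists_length_eq)
qed

lemma sum_card_filter_swap:
  assumes "finite A" "finite B"
  shows "(\<Sum>a\<in>A. card {b \<in> B. P a b}) = (\<Sum>b\<in>B. card {a \<in> A. P a b})"
  using sum.swap_restrict[OF assms, of "\<lambda>_ _. 1::nat" P] by simp

lemma restrict_comp_mem_PiE_image:
  assumes "bij_betw k A B" "g \<in> B \<rightarrow>\<^sub>E M" "Q (g ` B)"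
  shows "restrict (g \<circ> k) A \<in> {g \<in> A \<rightarrow>\<^sub>E M. Q (g ` A)}"
proof -
  have "restrict (g \<circ> k) A ` A = g ` k ` A" by auto
  also have "k ` A = B" using assms(1) by (rule bij_betw_imp_surj_on)
  finally have "Q (restrict (g \<circ> k) A ` A)" using assms(3) by simp
  moreover have "restrict (g \<circ> k) A \<in> A \<rightarrow>\<^sub>E M" using assms(2) bij_betw_apply[OF assms(1)] by auto
  ultimately show ?thesis by blast
qed

lemma card_PiE_image_bij_betw:
  assumes h: "bij_betw h T' T"
  shows "card {g \<in> T \<rightarrow>\<^sub>E M. Q (g ` T)} = card {g \<in> T' \<rightarrow>\<^sub>E M. Q (g ` T')}"
proof (rule bij_betw_same_card, rule bij_betwI[where f="\<lambda>g. restrict (g \<circ> h) T'"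
      and g="\<lambda>g. restrict (g \<circ> inv_into T' h) T"])
  have h': "bij_betw (inv_into T' h) T T'" using h by (rule bij_betw_inv_into)
  show "(\<lambda>g. restrict (g \<circ> h) T') \<in> {g \<in> T \<rightarrow>\<^sub>E M. Q (g ` T)} \<rightarrow> {g \<in> T' \<rightarrow>\<^sub>E M. Q (g ` T')}"
    using restrict_comp_mem_PiE_image[OF h] by blast
  show "(\<lambda>g. restrict (g \<circ> inv_into T' h) T) \<in> {g \<in> T' \<rightarrow>\<^sub>E M. Q (g ` T')} \<rightarrow> {g \<in> T \<rightarrow>\<^sub>E M. Q (g ` T)}"
    using restrict_comp_mem_PiE_image[OF h'] by blast
  have "inv_into T' h x \<in> T'" "h (inv_into T' h x) = x" if "x \<in> T" for x
    using that bij_betw_imp_surj_on[OF h] by (auto intro: inv_into_into f_inv_into_f)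
  then have left_inverse: "restrict (restrict (g \<circ> h) T' \<circ> inv_into T' h) T = restrict g T" for g
    by (intro restrict_ext) simp
  show "restrict (restrict (g \<circ> h) T' \<circ> inv_into T' h) T = g" if "g \<in> {g \<in> T \<rightarrow>\<^sub>E M. Q (g ` T)}" for g
    using left_inverse[of g] that by auto
  have "inv_into T' h (h x) = x" "h x \<in> T" if "x \<in> T'" for x
    using that h by (auto intro: inv_into_f_f bij_betw_apply simp: bij_betw_def)
  then have right_inverse: "restrict (restrict (g \<circ> inv_into T' h) T \<circ> h) T' = restrict g T'" for g
    by (intro restrict_ext) simp
  show "restrict (restrict (g \<circ> inv_into T' h) T \<circ> h) T' = g" if "g \<in> {g \<in> T' \<rightarrow>\<^sub>E M. Q (g ` T')}" for g
    using right_inverse[of g] that by auto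
qed

lemma card_PiE_image_eq_if_card_eq:
  assumes "finite T" "finite T'" "card T = card T'"
  shows "card {g \<in> T \<rightarrow>\<^sub>E M. Q (g ` T)} = card {g \<in> T' \<rightarrow>\<^sub>E M. Q (g ` T')}"
proof -
  obtain h where "bij_betw h T' T" using finite_same_card_bij assms by metis
  then show ?thesis by (rule card_PiE_image_bij_betw)
qed

lemma card_PiE_image_subset:
  assumes "finite I" "T \<subseteq> I"
  shows "card {f \<in> I \<rightarrow>\<^sub>E M. Q (f ` T)} = card {g \<in> T \<rightarrow>\<^sub>E M. Q (g ` T)} * card M ^ card (I - T)"
proof -
  let ?A = "{g \<in> T \<rightarrow>\<^sub>E M. Q (g ` T)}"
  have "card {f \<in> I \<rightarrow>\<^sub>E M. Q (f ` T)} = card (?A \<times> (I - T \<rightarrow>\<^sub>E M))"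
  proof (rule bij_betw_same_card, rule bij_betwI[where g="\<lambda>(g, g') i. if i \<in> T then g i else g' i"])
    have "restrict f T ` T = f ` T" for f :: "_ \<Rightarrow> 'a" by auto
    then show "(\<lambda>f. (restrict f T, restrict f (I - T))) \<in> {f \<in> I \<rightarrow>\<^sub>E M. Q (f ` T)} \<rightarrow> ?A \<times> (I - T \<rightarrow>\<^sub>E M)"
      using assms by auto
    have "(\<lambda>i. if i \<in> T then g i else g' i) ` T = g ` T" for g g' :: "_ \<Rightarrow> 'a" by auto
    then show "(\<lambda>(g, g') i. if i \<in> T then g i else g' i) \<in> ?A \<times> (I - T \<rightarrow>\<^sub>E M) \<rightarrow> {f \<in> I \<rightarrow>\<^sub>E M. Q (f ` T)}"
      using assms by (auto simp: PiE_def extensional_def)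
  qed (use assms in \<open>auto simp: fun_eq_iff PiE_def extensional_def\<close>)
  also have "\<dots> = card ?A * card M ^ card (I - T)"
    using assms by (simp add: card_cartesian_product card_PiE)
  finally show ?thesis .
qed

lemma card_supersets_of_card:
  assumes "finite I" "U \<subseteq> I" "card U \<le> k"
  shows "card {T. T \<subseteq> I \<and> card T = k \<and> U \<subseteq> T} = (card I - card U) choose (k - card U)"
proof -
  have fin: "finite U" "finite V" if "V \<subseteq> I" for V using assms that finite_subset by auto
  have "card {T. T \<subseteq> I \<and> card T = k \<and> U \<subseteq> T} = card {V. V \<subseteq> I - U \<and> card V = k - card U}"
  proof (rule bij_betw_same_card, rule bij_betwI[where f="\<lambda>T. T - U" and g="\<lambda>V. V \<union> U"])
    have "card (V \<union> U) = card V + card U" if "V \<subseteq> I - U" for V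
      using that fin by (intro card_Un_disjoint) auto
    then show "(\<lambda>V. V \<union> U) \<in> {V. V \<subseteq> I - U \<and> card V = k - card U} \<rightarrow> {T. T \<subseteq> I \<and> card T = k \<and> U \<subseteq> T}"
      using assms by auto
  qed (use assms fin in \<open>auto simp: card_Diff_subset\<close>)
  also have "\<dots> = (card I - card U) choose (k - card U)"
    using assms fin by (simp add: n_subsets card_Diff_subset)
  finally show ?thesis .
qed

lemma binomial_le_card_subsets_image:
  assumes "finite I" "mono Q" "J \<subseteq> f ` I" "card J \<le> b" "Q J" "b \<le> k" "k \<le> card I"
  shows "(card I - b) choose (k - b) \<le> card {T. T \<subseteq> I \<and> card T = k \<and> Q (f ` T)}"
proof -
  obtain U where U: "U \<subseteq> I" "J = f ` U" "card U \<le> b"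
    using subset_image_inj[THEN iffD1, OF assms(3)] assms(4) card_image by metis
  then obtain U' where U': "U \<subseteq> U'" "U' \<subseteq> I" "card U' = b"
    using exists_subset_between[OF _ _ U(1) assms(1)] assms(6,7) by (metis order_trans)
  have "Q (f ` T)" if "U' \<subseteq> T" for T
  proof -
    have "J \<subseteq> f ` T" using U(2) U'(1) that by auto
    then show ?thesis using monoD[OF assms(2)] assms(5) by (meson le_boolD)
  qed
  then have "{T. T \<subseteq> I \<and> card T = k \<and> U' \<subseteq> T} \<subseteq> {T. T \<subseteq> I \<and> card T = k \<and> Q (f ` T)}"
    by blast
  then have "card {T. T \<subseteq> I \<and> card T = k \<and> U' \<subseteq> T} \<le> card {T. T \<subseteq> I \<and> card T = k \<and> Q (f ` T)}"
    using assms(1) by (intro card_mono) auto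
  then show ?thesis
    using card_supersets_of_card[OF assms(1) U'(2)] U'(3) assms(6) by simp
qed

lemma card_PiE_image_mult_binomial_le:
  fixes Q :: "'a set \<Rightarrow> bool" and I :: "'i set" and S :: "'j set"
  assumes fin: "finite I" "finite M" "finite S" and card: "b \<le> card S" "card S \<le> card I"
    and "mono Q"
    and small_witness: "\<And>f. f \<in> I \<rightarrow>\<^sub>E M \<Longrightarrow> Q (f ` I) \<Longrightarrow> \<exists>J \<subseteq> f ` I. card J \<le> b \<and> Q J"
  shows "card {f \<in> I \<rightarrow>\<^sub>E M. Q (f ` I)} * ((card I - b) choose (card S - b))
         \<le> (card I choose card S) * card {g \<in> S \<rightarrow>\<^sub>E M. Q (g ` S)} * card M ^ (card I - card S)"
proof -
  define Ts where "Ts = {T. T \<subseteq> I \<and> card T = card S}"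
  define G where "G = {f \<in> I \<rightarrow>\<^sub>E M. Q (f ` I)}"
  have fin_Ts: "finite Ts" unfolding Ts_def using fin(1) by simp
  have fin_PiE: "finite (I \<rightarrow>\<^sub>E M)" using fin by (simp add: finite_PiE)
  have many_good_subsets: "(card I - b) choose (card S - b) \<le> card {T \<in> Ts. Q (f ` T)}" if "f \<in> G" for f
  proof -
    obtain J where "J \<subseteq> f ` I" "card J \<le> b" "Q J"
      using small_witness \<open>f \<in> G\<close> unfolding G_def by blast
    then show ?thesis
      unfolding Ts_def using binomial_le_card_subsets_image fin(1) \<open>mono Q\<close> card by simp
  qed
  have "card G * ((card I - b) choose (card S - b)) = (\<Sum>f\<in>G. (card I - b) choose (card S - b))"
    by simp
  also have "\<dots> \<le> (\<Sum>f\<in>G. card {T \<in> Ts. Q (f ` T)})"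
    using many_good_subsets by (rule sum_mono)
  also have "\<dots> \<le> (\<Sum>f \<in> I \<rightarrow>\<^sub>E M. card {T \<in> Ts. Q (f ` T)})"
    using fin_PiE by (intro sum_mono2) (auto simp: G_def)
  also have "\<dots> = (\<Sum>T\<in>Ts. card {f \<in> I \<rightarrow>\<^sub>E M. Q (f ` T)})"
    using sum_card_filter_swap[OF fin_PiE fin_Ts] .
  also have "\<dots> = (\<Sum>T\<in>Ts. card {g \<in> S \<rightarrow>\<^sub>E M. Q (g ` S)} * card M ^ (card I - card S))"
  proof (rule sum.cong[OF refl])
    fix T assume "T \<in> Ts"
    then have T: "T \<subseteq> I" "card T = card S" "finite T" unfolding Ts_def using fin(1) finite_subset by auto
    show "card {f \<in> I \<rightarrow>\<^sub>E M. Q (f ` T)} = card {g \<in> S \<rightarrow>\<^sub>E M. Q (g ` S)} * card M ^ (card I - card S)"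
      using card_PiE_image_subset[OF fin(1) T(1), where M=M and Q=Q]
        card_PiE_image_eq_if_card_eq[OF T(3) fin(3) T(2), where M=M and Q=Q]
        T fin(1) by (simp add: card_Diff_subset)
  qed
  also have "\<dots> = (card I choose card S) * card {g \<in> S \<rightarrow>\<^sub>E M. Q (g ` S)} * card M ^ (card I - card S)"
    using fin(1) by (simp add: Ts_def n_subsets)
  finally show ?thesis unfolding G_def .
qed

lemma binomial_le_pow3_mult_binomial:
  assumes "b \<le> k" "k \<le> n" "n + 2 * b \<le> 3 * k + 2"
  shows "n choose k \<le> 3 ^ b * ((n - b) choose (k - b))"
  using assms
proof (induction b)
  case (Suc b)
  obtain N K where NK: "n - b = Suc N" "k - b = Suc K" "N = n - Suc b" "K = k - Suc b"
    using Suc.prems by (metis Suc_diff_Suc less_eq_Suc_le less_le_trans)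
  have "(Suc N choose Suc K) * Suc K = Suc N * (N choose K)"
    by (rule Suc_times_binomial_eq[symmetric])
  also have "\<dots> \<le> 3 * Suc K * (N choose K)"
    using Suc.prems NK by (intro mult_right_mono) auto
  finally have "(n - b) choose (k - b) \<le> 3 * ((n - Suc b) choose (k - Suc b))"
    unfolding NK by (metis mult.assoc mult.commute mult_le_cancel2 zero_less_Suc)
  then show ?case
    using Suc by (auto intro: order_trans)
qed simp

lemma one_minus_power_le_exp:
  fixes x :: real
  assumes "0 \<le> x" "x \<le> 1"
  shows "(1 - x) ^ j \<le> exp (- x * j)"
proof -
  have "(1 - x) ^ j \<le> exp (- x) ^ j"
    using assms exp_ge_add_one_self[of "- x"] by (intro power_mono) auto
  then show ?thesis by (simp add: exp_of_nat_mult[symmetric] mult.commute)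
qed

lemma card_Diff_power_le_exp:
  assumes "finite H" "H \<noteq> {}" "K \<subseteq> H" "l * real (card H) / real \<rho> \<le> real (card K)"
    and "0 < \<rho>" "\<rho> \<le> 2 * j" "0 \<le> l"
  shows "real (card (H - K)) ^ j \<le> real (card H) ^ j * exp (- l / 2)"
proof -
  define x where "x = real (card K) / real (card H)"
  have n: "0 < real (card H)" using assms(1,2) by (simp add: card_gt_0_iff)
  have x: "0 \<le> x" "x \<le> 1" unfolding x_def using n assms(1,3) by (auto intro: card_mono)
  have "l / 2 \<le> (l / real \<rho>) * real j"
  proof -
    have "real \<rho> \<le> real j * 2" using assms(6) by linarith
    then show ?thesis using assms(5,7) by (simp add: field_simps mult_left_mono)
  qed
  also have "\<dots> \<le> x * real j"
    using assms(4) n unfolding x_def by (intro mult_right_mono) (simp_all add: field_simps)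
  finally have exponent: "l / 2 \<le> x * real j" .
  have "(1 - x) ^ j \<le> exp (- x * real j)"
    by (rule one_minus_power_le_exp[OF x])
  also have "\<dots> \<le> exp (- l / 2)"
    using exponent by simp
  finally have "(1 - x) ^ j \<le> exp (- l / 2)" .
  moreover have "real (card (H - K)) = real (card H) * (1 - x)"
    using n assms(1-3) card_mono[OF assms(1,3)] unfolding x_def
    by (simp add: card_Diff_subset finite_subset of_nat_diff field_simps)
  ultimately show ?thesis
    using n by (simp add: power_mult_distrib)
qed

lemma card_defining_set_le:
  assumes "comb_dim H CD b" "is_defining_set H CD \<sigma> J"
  shows "card J \<le> b"
proof -
  have J: "J \<subseteq> H" "\<sigma> \<in> CD J" and minimal: "\<And>J'. J' \<subseteq> H \<Longrightarrow> \<sigma> \<in> CD J' \<Longrightarrow> card J \<le> card J'"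
    using assms(2) unfolding is_defining_set_def by auto
  obtain J' where "J' \<subseteq> J" "card J' \<le> b" "\<sigma> \<in> CD J'"
    using assms(1) J unfolding comb_dim_def has_dim_bound_def by blast
  moreover from \<open>J' \<subseteq> J\<close> J(1) have "J' \<subseteq> H" by blast
  ultimately show ?thesis using minimal[of J'] by linarith
qed

lemma complies_CS_mem_CD_iff:
  assumes "complies_CS H CD D" "R \<subseteq> H"
  shows "\<sigma> \<in> CD R \<longleftrightarrow>
           (\<exists>J. is_defining_set H CD \<sigma> J \<and> J \<subseteq> R) \<and> conflict_list H CD D \<sigma> \<inter> R = {}"
  using assms unfolding complies_CS_def by blast

lemma samples_in_CD_eq:
  assumes "complies_CS H CD D"
  shows "{g \<in> T \<rightarrow>\<^sub>E H. \<sigma> \<in> CD (g ` T)} =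
         {g \<in> T \<rightarrow>\<^sub>E H - conflict_list H CD D \<sigma>. \<exists>J. is_defining_set H CD \<sigma> J \<and> J \<subseteq> g ` T}"
proof -
  have "\<sigma> \<in> CD (g ` T) \<longleftrightarrow>
          (\<exists>J. is_defining_set H CD \<sigma> J \<and> J \<subseteq> g ` T) \<and> conflict_list H CD D \<sigma> \<inter> g ` T = {}"
    if "g \<in> T \<rightarrow>\<^sub>E H" for g
    using that by (intro complies_CS_mem_CD_iff[OF assms]) auto
  then show ?thesis by (auto simp: PiE_iff)
qed

lemma card_samples_in_CD_le:
  assumes "finite H" "comb_dim H CD b" "complies_CS H CD D"
    and fin: "finite I" "finite S"
    and card: "b \<le> card S" "card S \<le> card I" "card I + 2 * b \<le> 3 * card S + 2"
  shows "card {f \<in> I \<rightarrow>\<^sub>E H. \<sigma> \<in> CD (f ` I)}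
         \<le> 3 ^ b * card {g \<in> S \<rightarrow>\<^sub>E H. \<sigma> \<in> CD (g ` S)}
             * card (H - conflict_list H CD D \<sigma>) ^ (card I - card S)"
proof -
  define M where "M = H - conflict_list H CD D \<sigma>"
  define Q where "Q = (\<lambda>R. \<exists>J. is_defining_set H CD \<sigma> J \<and> J \<subseteq> R)"
  define c where "c = (card I - b) choose (card S - b)"
  have samples: "{g \<in> T \<rightarrow>\<^sub>E H. \<sigma> \<in> CD (g ` T)} = {g \<in> T \<rightarrow>\<^sub>E M. Q (g ` T)}" for T :: "'i set"
    unfolding M_def Q_def by (rule samples_in_CD_eq[OF assms(3)])
  have "mono Q" unfolding Q_def mono_def le_bool_def by (meson order_trans)
  moreover have "\<exists>J \<subseteq> f ` I. card J \<le> b \<and> Q J" if Qf: "Q (f ` I)" for f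
  proof -
    obtain J where J: "is_defining_set H CD \<sigma> J" "J \<subseteq> f ` I"
      using Qf unfolding Q_def by blast
    then show ?thesis
      using card_defining_set_le[OF assms(2) J(1)] unfolding Q_def by blast
  qed
  ultimately have "card {f \<in> I \<rightarrow>\<^sub>E M. Q (f ` I)} * c
      \<le> (card I choose card S) * card {g \<in> S \<rightarrow>\<^sub>E M. Q (g ` S)} * card M ^ (card I - card S)"
    unfolding c_def M_def using assms(1) fin card by (intro card_PiE_image_mult_binomial_le) auto
  also have "\<dots> \<le> (3 ^ b * c) * card {g \<in> S \<rightarrow>\<^sub>E M. Q (g ` S)} * card M ^ (card I - card S)"
    unfolding c_def using card by (intro mult_right_mono binomial_le_pow3_mult_binomial) auto
  finally have "card {f \<in> I \<rightarrow>\<^sub>E M. Q (f ` I)} * c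
      \<le> (3 ^ b * card {g \<in> S \<rightarrow>\<^sub>E M. Q (g ` S)} * card M ^ (card I - card S)) * c"
    by (simp only: ac_simps)
  moreover have "c > 0" unfolding c_def using card by simp
  ultimately show ?thesis unfolding samples M_def by simp
qed

lemma card_CD_le_local_growth:
  assumes "finite H" "R \<subseteq> H"
  shows "card (CD R) \<le> local_growth H CD (card R)"
proof -
  have "{card (CD I) | I. I \<subseteq> H \<and> card I = card R} \<subseteq> (\<lambda>I. card (CD I)) ` Pow H" by auto
  then have "finite {card (CD I) | I. I \<subseteq> H \<and> card I = card R}"
    using assms(1) finite_subset by blast
  then show ?thesis
    unfolding local_growth_def using assms(2) by (intro Max_ge) auto
qed

lemma sum_card_samples_in_CD_le:
  assumes "finite H" "finite S" "\<And>R. R \<subseteq> H \<Longrightarrow> finite (CD R)"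
    and growth: "\<And>m. m \<le> card H \<Longrightarrow> real (local_growth H CD m) \<le> 2 powr \<alpha> * real m powr \<beta>"
    and "0 \<le> \<beta>"
  shows "(\<Sum>\<sigma> \<in> \<Union>(CD ` Pow H). card {g \<in> S \<rightarrow>\<^sub>E H. \<sigma> \<in> CD (g ` S)})
         \<le> real (card H) ^ card S * (2 powr \<alpha> * real (card S) powr \<beta>)"
proof -
  have fin_cells: "finite (\<Union>(CD ` Pow H))" using assms(1,3) by auto
  have fin_PiE: "finite (S \<rightarrow>\<^sub>E H)" using assms(1,2) by (simp add: finite_PiE)
  have "(\<Sum>\<sigma> \<in> \<Union>(CD ` Pow H). card {g \<in> S \<rightarrow>\<^sub>E H. \<sigma> \<in> CD (g ` S)})
      = (\<Sum>g \<in> S \<rightarrow>\<^sub>E H. card {\<sigma> \<in> \<Union>(CD ` Pow H). \<sigma> \<in> CD (g ` S)})"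
    by (rule sum_card_filter_swap[OF fin_cells fin_PiE])
  also have "\<dots> = (\<Sum>g \<in> S \<rightarrow>\<^sub>E H. card (CD (g ` S)))"
    by (intro sum.cong refl arg_cong[where f=card]) auto
  finally have "real (\<Sum>\<sigma> \<in> \<Union>(CD ` Pow H). card {g \<in> S \<rightarrow>\<^sub>E H. \<sigma> \<in> CD (g ` S)})
      = (\<Sum>g \<in> S \<rightarrow>\<^sub>E H. real (card (CD (g ` S))))"
    by simp
  also have "\<dots> \<le> (\<Sum>g \<in> S \<rightarrow>\<^sub>E H. 2 powr \<alpha> * real (card S) powr \<beta>)"
  proof (rule sum_mono)
    fix g assume "g \<in> S \<rightarrow>\<^sub>E H"
    then have sub: "g ` S \<subseteq> H" by auto
    have "real (card (CD (g ` S))) \<le> real (local_growth H CD (card (g ` S)))"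
      using card_CD_le_local_growth[OF assms(1) sub] by simp
    also have "\<dots> \<le> 2 powr \<alpha> * real (card (g ` S)) powr \<beta>"
      using growth card_mono[OF assms(1) sub] by simp
    also have "\<dots> \<le> 2 powr \<alpha> * real (card S) powr \<beta>"
      using assms(2,5) card_image_le by (intro mult_left_mono powr_mono2) auto
    finally show "real (card (CD (g ` S))) \<le> 2 powr \<alpha> * real (card S) powr \<beta>" .
  qed
  also have "\<dots> = real (card H) ^ card S * (2 powr \<alpha> * real (card S) powr \<beta>)"
    using assms(1,2) by (simp add: card_PiE)
  finally show ?thesis by simp
qed

lemma card_samples_in_heavy_cell_le:
  assumes "finite H" "H \<noteq> {}" "comb_dim H CD b" "complies_CS H CD D" "4 * b \<le> \<rho>" "0 \<le> l"
    and heavy: "l * real (card H) / real \<rho> \<le> real (card (conflict_list H CD D \<sigma>))"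
  shows "real (card {f \<in> {..<\<rho>} \<rightarrow>\<^sub>E H. \<sigma> \<in> CD (f ` {..<\<rho>})})
         \<le> 3 ^ b * exp (- l / 2) * real (card H) ^ (\<rho> - \<rho> div 2)
             * real (card {g \<in> {..<\<rho> div 2} \<rightarrow>\<^sub>E H. \<sigma> \<in> CD (g ` {..<\<rho> div 2})})"
proof -
  define k where "k = \<rho> div 2"
  define count where "count = real (card {g \<in> {..<k} \<rightarrow>\<^sub>E H. \<sigma> \<in> CD (g ` {..<k})})"
  define m where "m = card (H - conflict_list H CD D \<sigma>)"
  have "0 < b" using assms(3) by (simp add: comb_dim_def has_dim_bound_def)
  then have \<rho>: "0 < \<rho>" "\<rho> \<le> 2 * (\<rho> - k)"
    and cards: "b \<le> card {..<k}" "card {..<k} \<le> card {..<\<rho>}" "card {..<\<rho>} + 2 * b \<le> 3 * card {..<k} + 2"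
    using assms(5) by (auto simp: k_def)
  have "card {f \<in> {..<\<rho>} \<rightarrow>\<^sub>E H. \<sigma> \<in> CD (f ` {..<\<rho>})}
      \<le> 3 ^ b * card {g \<in> {..<k} \<rightarrow>\<^sub>E H. \<sigma> \<in> CD (g ` {..<k})} * m ^ (\<rho> - k)"
    using card_samples_in_CD_le[OF assms(1,3,4) _ _ cards] unfolding m_def by simp
  then have "real (card {f \<in> {..<\<rho>} \<rightarrow>\<^sub>E H. \<sigma> \<in> CD (f ` {..<\<rho>})})
      \<le> real (3 ^ b * card {g \<in> {..<k} \<rightarrow>\<^sub>E H. \<sigma> \<in> CD (g ` {..<k})} * m ^ (\<rho> - k))"
    by (rule of_nat_mono)
  also have "\<dots> = 3 ^ b * count * real m ^ (\<rho> - k)"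
    unfolding count_def by simp
  also have "\<dots> \<le> 3 ^ b * count * (real (card H) ^ (\<rho> - k) * exp (- l / 2))"
    using assms(1,2,6) heavy \<rho> unfolding m_def count_def
    by (intro mult_left_mono card_Diff_power_le_exp) (auto simp: conflict_list_def)
  finally show ?thesis
    unfolding count_def k_def by (simp only: ac_simps)
qed

lemma sum_card_heavy_cells_le:
  assumes "finite H" "H \<noteq> {}" "comb_dim H CD b" "complies_CS H CD D"
    and "\<And>R. R \<subseteq> H \<Longrightarrow> finite (CD R)"
    and "\<And>m. m \<le> card H \<Longrightarrow> real (local_growth H CD m) \<le> 2 powr \<alpha> * real m powr \<beta>"
    and "0 \<le> \<beta>" "4 * b \<le> \<rho>" "0 \<le> l"
  shows "(\<Sum>f \<in> {..<\<rho>} \<rightarrow>\<^sub>E H. real (card (heavy_cells H CD D \<rho> l (f ` {..<\<rho>}))))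
         \<le> 3 ^ b * exp (- l / 2) * (2 powr \<alpha> * real (\<rho> div 2) powr \<beta>) * real (card H) ^ \<rho>"
proof -
  define k where "k = \<rho> div 2"
  define I where "I = {..<\<rho>}"
  define C where "C = \<Union>(CD ` Pow H)"
  define heavy where "heavy = {\<sigma> \<in> C. l * real (card H) / real \<rho> \<le> real (card (conflict_list H CD D \<sigma>))}"
  define count where "count = (\<lambda>\<sigma>. real (card {g \<in> {..<k} \<rightarrow>\<^sub>E H. \<sigma> \<in> CD (g ` {..<k})}))"
  define factor where "factor = 3 ^ b * exp (- l / 2) * real (card H) ^ (\<rho> - k)"
  have fin: "finite C" "finite heavy" "finite (I \<rightarrow>\<^sub>E H)"
    using assms(1,5) by (auto simp: C_def heavy_def I_def finite_PiE)
  have "heavy_cells H CD D \<rho> l (f ` I) = {\<sigma> \<in> heavy. \<sigma> \<in> CD (f ` I)}" if "f \<in> I \<rightarrow>\<^sub>E H" for f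
    using that unfolding heavy_cells_def heavy_def C_def by auto
  then have "(\<Sum>f \<in> I \<rightarrow>\<^sub>E H. real (card (heavy_cells H CD D \<rho> l (f ` I))))
      = real (\<Sum>f \<in> I \<rightarrow>\<^sub>E H. card {\<sigma> \<in> heavy. \<sigma> \<in> CD (f ` I)})"
    by simp
  also have "\<dots> = (\<Sum>\<sigma> \<in> heavy. real (card {f \<in> I \<rightarrow>\<^sub>E H. \<sigma> \<in> CD (f ` I)}))"
    unfolding of_nat_sum[symmetric] by (simp only: sum_card_filter_swap[OF fin(3,2)])
  also have "\<dots> \<le> (\<Sum>\<sigma> \<in> heavy. factor * count \<sigma>)"
    using card_samples_in_heavy_cell_le[OF assms(1-4,8,9)]
    unfolding heavy_def I_def factor_def count_def k_def by (intro sum_mono) auto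
  also have "\<dots> \<le> factor * (\<Sum>\<sigma> \<in> C. count \<sigma>)"
    unfolding sum_distrib_left[symmetric] using fin
    by (intro mult_left_mono sum_mono2) (auto simp: heavy_def count_def factor_def)
  also have "\<dots> \<le> factor * (real (card H) ^ k * (2 powr \<alpha> * real k powr \<beta>))"
    using sum_card_samples_in_CD_le[OF assms(1) _ assms(5,6,7), of "{..<k}"] unfolding C_def count_def
    by (intro mult_left_mono) (auto simp: factor_def)
  also have "\<dots> = 3 ^ b * exp (- l / 2) * (2 powr \<alpha> * real k powr \<beta>) * real (card H) ^ \<rho>"
    unfolding factor_def k_def by (simp add: power_add[symmetric])
  finally show ?thesis unfolding I_def k_def .
qed

theorem mainTheorem2:
  fixes H :: "'h set" and CD :: "'h set \<Rightarrow> 'c set" and D :: "'c \<Rightarrow> 'h set"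
    and b \<rho> :: nat and \<alpha> \<beta> l :: real
  assumes "finite H" and "H \<noteq> {}"
    and "comb_dim H CD b"
    and "valid_defining_choice H CD D"
    and "complies_CS H CD D"
    and "\<forall>I. I \<subseteq> H \<longrightarrow> finite (CD I)"
    and "\<forall>m \<le> card H. real (local_growth H CD m) \<le> 2 powr \<alpha> * real m powr \<beta>"
    and "\<beta> \<ge> 1"
    and "real \<rho> \<ge> 4 * real b"
    and "l > 1"
  shows "measure_pmf.expectation (rho_sample H \<rho>) (\<lambda>R. real (card (heavy_cells H CD D \<rho> l R)))
           \<le> 3 ^ b * 2 powr (\<alpha> - \<beta>) * real \<rho> powr \<beta> * exp (- l / 2)"
proof -
  let ?heavy = "\<lambda>R. real (card (heavy_cells H CD D \<rho> l R))"
  have n: "0 < real (card H) ^ \<rho>" using assms(1,2) by (simp add: card_gt_0_iff)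
  have "4 * b \<le> \<rho>" using assms(9) by linarith
  then have sum: "(\<Sum>f \<in> {..<\<rho>} \<rightarrow>\<^sub>E H. ?heavy (f ` {..<\<rho>}))
      \<le> 3 ^ b * exp (- l / 2) * (2 powr \<alpha> * real (\<rho> div 2) powr \<beta>) * real (card H) ^ \<rho>"
    using assms by (intro sum_card_heavy_cells_le) auto
  have "measure_pmf.expectation (rho_sample H \<rho>) ?heavy
      \<le> 3 ^ b * exp (- l / 2) * (2 powr \<alpha> * real (\<rho> div 2) powr \<beta>)"
    unfolding expectation_rho_sample[OF assms(1,2)] pos_divide_le_eq[OF n] by (rule sum)
  also have "\<dots> \<le> 3 ^ b * exp (- l / 2) * (2 powr \<alpha> * (real \<rho> / 2) powr \<beta>)"
    using assms(8) real_of_nat_div[of \<rho> 2] by (intro mult_left_mono powr_mono2) simp_all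
  also have "\<dots> = 3 ^ b * 2 powr (\<alpha> - \<beta>) * real \<rho> powr \<beta> * exp (- l / 2)"
    by (simp add: powr_divide powr_diff)
  finally show ?thesis .
qed

end
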